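(* Let $f(p)=1+\sum_{n\ge1}a_np^{2n}$ with $a_n\ge0$ for all $n$ and the series converging for all $p\in\mathbb R$, and set $g(s)=f(\sqrt{|s|})$. Then $g$ is convex and nondecreasing on $[0,\infty)$, $g(p^2)=f(p)$, and for every unit vector $\psi$ in the standard model with $\psi\in C_c^\infty((-k_{\max},k_{\max}))$, $$\Delta_\psi\mathbf x\,\Delta_\psi\mathbf p\ \ge\ \tfrac14\,g(\Delta_\psi\mathbf p)^2,\qquad\text{i.e.}\qquad \Delta_\psi\mathbf x\ge\frac{f(\sqrt{\Delta_\psi\mathbf p})^2}{4\Delta_\psi\mathbf p}.$$
   Context: Standard model: $k_{\max}=\int_0^\infty dp/f(p)\in(0,\infty]$, $p(k)$ the inverse of $p\mapsto\int_0^pds/f(s)$, Hilbert space $L^2([-k_{\max},k_{\max}],dk)$ (or $L^2(\mathbb R)$ if $k_{\max}=\infty$), $\mathbf x=i\,d/dk$, $\mathbf p=$ multiplication by $p(k)$, so that $[\mathbf x,\mathbf p]=if(\mathbf p)$ on such $\psi$. $\Delta_\psi A=\langle\psi,A^2\psi\rangle-\langle\psi,A\psi\rangle^2$. *)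

theory Defs
  imports "HOL-Analysis.Analysis"
begin

definition fser :: "(nat \<Rightarrow> real) \<Rightarrow> real \<Rightarrow> real" where
  "fser a p = 1 + (\<Sum>n. a (Suc n) * p ^ (2 * Suc n))"

definition kmax :: "(real \<Rightarrow> real) \<Rightarrow> ennreal" where
  "kmax f = (\<integral>\<^sup>+ p. ennreal (indicator {0..} p / f p) \<partial>lborel)"

definition Kfun :: "(real \<Rightarrow> real) \<Rightarrow> real \<Rightarrow> real" where
  "Kfun f p = (LBINT s=ereal 0..ereal p. 1 / f s)"

definition pfun :: "(real \<Rightarrow> real) \<Rightarrow> real \<Rightarrow> real" where
  "pfun f k = (THE p. Kfun f p = k)"

definition kdom :: "(real \<Rightarrow> real) \<Rightarrow> real set" where
  "kdom f = {k. ennreal \<bar>k\<bar> < kmax f}"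

definition vderiv :: "nat \<Rightarrow> (real \<Rightarrow> complex) \<Rightarrow> real \<Rightarrow> complex" where
  "vderiv n \<psi> = ((\<lambda>g x. vector_derivative g (at x)) ^^ n) \<psi>"

definition smooth :: "(real \<Rightarrow> complex) \<Rightarrow> bool" where
  "smooth \<psi> \<longleftrightarrow> (\<forall>n x. vderiv n \<psi> differentiable (at x))"

text \<open>psi in C_c^infinity(U): smooth with compact topological support contained in U
  (psi is regarded as a function on R vanishing outside U).\<close>
definition Cc_inf :: "real set \<Rightarrow> (real \<Rightarrow> complex) \<Rightarrow> bool" where
  "Cc_inf U \<psi> \<longleftrightarrow> smooth \<psi> \<and> compact (closure {k. \<psi> k \<noteq> 0})
      \<and> closure {k. \<psi> k \<noteq> 0} \<subseteq> U"

definition inner2 :: "(real \<Rightarrow> complex) \<Rightarrow> (real \<Rightarrow> complex) \<Rightarrow> complex" where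
  "inner2 \<phi> \<xi> = (LINT k|lborel. cnj (\<phi> k) * \<xi> k)"

definition xop :: "(real \<Rightarrow> complex) \<Rightarrow> real \<Rightarrow> complex" where
  "xop \<psi> = (\<lambda>k. \<i> * vector_derivative \<psi> (at k))"

definition pop :: "(real \<Rightarrow> real) \<Rightarrow> (real \<Rightarrow> complex) \<Rightarrow> real \<Rightarrow> complex" where
  "pop f \<psi> = (\<lambda>k. complex_of_real (pfun f k) * \<psi> k)"

definition Delta :: "((real \<Rightarrow> complex) \<Rightarrow> real \<Rightarrow> complex) \<Rightarrow> (real \<Rightarrow> complex) \<Rightarrow> complex" where
  "Delta A \<psi> = inner2 \<psi> (A (A \<psi>)) - (inner2 \<psi> (A \<psi>))\<^sup>2"

end

theory Submission
  imports Defs "HOL-Probability.Probability_Measure"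
begin

text \<open>The momentum p(k) inverts K(p) = int_0^p ds/f(s), whose range is exactly (-k_max, k_max),
  so on the support of psi it is differentiable with p' = f(p). Integrating by parts,
  <f(p)> = - int (p - <p>) d|psi|^2/dk, and Cauchy-Schwarz, in the form of a quadratic in t that
  is the integral of a square, gives the Robertson bound <f(p)>^2 <= 4 Delta x Delta p.
  Finally g(s) = 1 + sum a_n |s|^n is convex and nondecreasing on [0, infinity), so Jensen's
  inequality for the probability density |psi|^2 yields
  g(Delta p) <= g(<p^2>) <= <g(p^2)> = <f(p)>.\<close>

lemma convex_on_suminf:
  fixes f :: "nat \<Rightarrow> 'a::real_vector \<Rightarrow> real"
  assumes "convex S" "\<And>n. convex_on S (f n)" "\<And>x. x \<in> S \<Longrightarrow> summable (\<lambda>n. f n x)"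
  shows "convex_on S (\<lambda>x. \<Sum>n. f n x)"
proof (rule convex_onI)
  fix t :: real and x y assume t: "0 < t" "t < 1" and xy: "x \<in> S" "y \<in> S"
  then have "(1 - t) *\<^sub>R x + t *\<^sub>R y \<in> S"
    using convexD_alt[OF assms(1)] by simp
  then have "(\<Sum>n. f n ((1 - t) *\<^sub>R x + t *\<^sub>R y)) \<le> (\<Sum>n. (1 - t) * f n x + t * f n y)"
    using t xy assms by (intro suminf_le convex_onD summable_add summable_mult) auto
  also have "\<dots> = (1 - t) * (\<Sum>n. f n x) + t * (\<Sum>n. f n y)"
    using xy assms by (simp add: suminf_add[symmetric] suminf_mult summable_mult)
  finally show "(\<Sum>n. f n ((1 - t) *\<^sub>R x + t *\<^sub>R y)) \<le> (1 - t) * (\<Sum>n. f n x) + t * (\<Sum>n. f n y)" .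
qed (rule assms(1))

lemma convex_on_abs_power: "convex_on UNIV (\<lambda>x::real. \<bar>x\<bar> ^ m)"
proof (rule convex_onI)
  fix t x y :: real assume t: "0 < t" "t < 1"
  have pow: "convex_on {0..} (\<lambda>x::real. x ^ m)"
    by (cases "even m") (auto intro: convex_on_subset[OF convex_power_even] convex_power_odd)
  have "\<bar>(1 - t) * x + t * y\<bar> ^ m \<le> ((1 - t) * \<bar>x\<bar> + t * \<bar>y\<bar>) ^ m"
    using t by (intro power_mono) (auto simp: abs_mult intro: order.trans[OF abs_triangle_ineq])
  also have "\<dots> \<le> (1 - t) * \<bar>x\<bar> ^ m + t * \<bar>y\<bar> ^ m"
    using convex_onD[OF pow, of t "\<bar>x\<bar>" "\<bar>y\<bar>"] t by simp
  finally show "\<bar>(1 - t) *\<^sub>R x + t *\<^sub>R y\<bar> ^ m \<le> (1 - t) * \<bar>x\<bar> ^ m + t * \<bar>y\<bar> ^ m"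
    by simp
qed simp

locale nonneg_even_powser =
  fixes a :: "nat \<Rightarrow> real"
  assumes coeff_nonneg: "\<And>n. n \<ge> 1 \<Longrightarrow> a n \<ge> 0"
    and summable_even: "\<And>p::real. summable (\<lambda>n. a (Suc n) * p ^ (2 * Suc n))"
begin

lemma summable_abs_power: "summable (\<lambda>n. a (Suc n) * \<bar>s\<bar> ^ Suc n)"
  using summable_even[of "sqrt \<bar>s\<bar>"] unfolding power_mult by simp

lemma fser_sqrt_abs: "fser a (sqrt \<bar>s\<bar>) = 1 + (\<Sum>n. a (Suc n) * \<bar>s\<bar> ^ Suc n)"
  unfolding fser_def power_mult by simp

lemma fser_sqrt_abs_power2: "fser a (sqrt \<bar>p\<^sup>2\<bar>) = fser a p"
  unfolding fser_def power_mult by simp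

lemma convex_fser_sqrt_abs: "convex_on UNIV (\<lambda>s. fser a (sqrt \<bar>s\<bar>))"
  unfolding fser_sqrt_abs
  using coeff_nonneg
  by (intro convex_on_add convex_on_suminf convex_on_cmul convex_on_abs_power summable_abs_power)
     (auto simp: convex_on_const)

lemma mono_on_fser_sqrt_abs: "mono_on {0..} (\<lambda>s. fser a (sqrt \<bar>s\<bar>))"
proof (rule mono_onI)
  fix x y :: real assume "x \<in> {0..}" "y \<in> {0..}" "x \<le> y"
  then have "(\<Sum>n. a (Suc n) * \<bar>x\<bar> ^ Suc n) \<le> (\<Sum>n. a (Suc n) * \<bar>y\<bar> ^ Suc n)"
    using coeff_nonneg by (intro suminf_le summable_abs_power mult_left_mono power_mono) auto
  then show "fser a (sqrt \<bar>x\<bar>) \<le> fser a (sqrt \<bar>y\<bar>)"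
    by (simp only: fser_sqrt_abs)
qed

lemma fser_ge_1: "fser a p \<ge> 1"
proof -
  have "0 \<le> (\<Sum>n. a (Suc n) * \<bar>p\<^sup>2\<bar> ^ Suc n)"
    using coeff_nonneg by (intro suminf_nonneg summable_abs_power) auto
  then show ?thesis
    using fser_sqrt_abs_power2[of p] fser_sqrt_abs[of "p\<^sup>2"] by simp
qed

lemma continuous_fser: "continuous_on UNIV (fser a)"
proof -
  have "continuous_on UNIV (\<lambda>s. fser a (sqrt \<bar>s\<bar>))"
    by (rule convex_on_continuous[OF _ convex_fser_sqrt_abs]) simp
  then have "continuous_on UNIV (\<lambda>p. fser a (sqrt \<bar>p\<^sup>2\<bar>))"
    by (rule continuous_on_compose2[of UNIV _ UNIV]) (auto intro: continuous_intros)
  then show ?thesis by (simp only: fser_sqrt_abs_power2)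
qed

end

text \<open>The function f of the deformed commutator [x, p] = i f(p).\<close>
locale deformation =
  fixes f :: "real \<Rightarrow> real"
  assumes continuous_f: "continuous_on UNIV f"
    and f_pos: "\<And>p. f p > 0"
    and f_even: "\<And>p. f (- p) = f p"
begin

lemma f_nonzero: "f p \<noteq> 0"
  using f_pos[of p] by simp

lemma continuous_on_inverse_f: "continuous_on S (\<lambda>s. 1 / f s)"
  using continuous_on_subset[OF continuous_f subset_UNIV] f_nonzero
  by (intro continuous_intros) auto

lemma Kfun_has_real_derivative: "(Kfun f has_real_derivative 1 / f p) (at p)"
proof -
  define M where "M = \<bar>p\<bar> + 1"
  have "((\<lambda>u. LBINT s=ereal 0..ereal u. 1 / f s) has_vector_derivative 1 / f p) (at p within {-M..M})"
    by (rule interval_integral_FTC2) (auto simp: M_def intro: continuous_on_inverse_f)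
  moreover have "at p within {-M..M} = at p"
    by (rule at_within_Icc_at) (auto simp: M_def)
  ultimately show ?thesis
    by (simp add: Kfun_def[abs_def] has_real_derivative_iff_has_vector_derivative)
qed

lemma isCont_Kfun: "isCont (Kfun f) p"
  using Kfun_has_real_derivative by (rule DERIV_isCont)

lemma Kfun_strict_mono: "strict_mono (Kfun f)"
proof (rule strict_monoI)
  fix x y :: real assume "x < y"
  then show "Kfun f x < Kfun f y"
  proof (rule DERIV_pos_imp_increasing)
    show "\<exists>d. (Kfun f has_real_derivative d) (at z) \<and> d > 0" for z
      using Kfun_has_real_derivative[of z] f_pos[of z] by auto
  qed
qed

lemma pfun_Kfun: "pfun f (Kfun f p) = p"
  unfolding pfun_def using strict_mono_eq[OF Kfun_strict_mono] by simp

lemma Kfun_0: "Kfun f 0 = 0"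
  by (simp add: Kfun_def)

lemma Kfun_minus: "Kfun f (- p) = - Kfun f p"
proof -
  have "((\<lambda>q. Kfun f (- q) + Kfun f q) has_real_derivative 0) (at q)" for q
  proof -
    have "((\<lambda>q. Kfun f (- q) + Kfun f q) has_real_derivative 1 / f (- q) * (- 1) + 1 / f q) (at q)"
      by (rule derivative_eq_intros DERIV_chain2[OF Kfun_has_real_derivative] Kfun_has_real_derivative | simp)+
    then show ?thesis by (simp add: f_even)
  qed
  then have "Kfun f (- p) + Kfun f p = Kfun f (- 0) + Kfun f 0"
    by (intro DERIV_isconst_all) auto
  then show ?thesis by (simp add: Kfun_0)
qed

lemma nn_integral_inverse_f:
  assumes "0 \<le> t"
  shows "(\<integral>\<^sup>+ p. ennreal (indicator {0..t} p / f p) \<partial>lborel) = ennreal (Kfun f t)"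
proof -
  have int: "integrable lborel (\<lambda>p. indicator {0..t} p *\<^sub>R (1 / f p))"
    by (rule borel_integrable_compact) (auto intro: continuous_on_inverse_f)
  have "(\<integral>\<^sup>+ p. ennreal (indicator {0..t} p / f p) \<partial>lborel)
      = ennreal (LINT p|lborel. indicator {0..t} p *\<^sub>R (1 / f p))"
    using int f_pos
    by (subst nn_integral_eq_integral[symmetric]) (auto intro!: nn_integral_cong simp: indicator_def less_imp_le)
  also have "(LINT p|lborel. indicator {0..t} p *\<^sub>R (1 / f p)) = Kfun f t"
    using assms by (simp add: Kfun_def interval_integral_Icc set_lebesgue_integral_def)
  finally show ?thesis .
qed

lemma kmax_eq_SUP_Kfun: "kmax f = (SUP n::nat. ennreal (Kfun f (real n)))"
proof -
  define h where "h = (\<lambda>(n::nat) p. ennreal (indicator {0..real n} p / f p))"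
  have "incseq h"
    unfolding h_def incseq_def le_fun_def
    using f_pos by (auto intro!: ennreal_leI divide_right_mono simp: indicator_def)
  moreover have "h n \<in> borel_measurable lborel" for n
  proof -
    have [measurable]: "f \<in> borel_measurable borel"
      by (rule borel_measurable_continuous_onI[OF continuous_f])
    show ?thesis
      unfolding h_def by measurable
  qed
  ultimately have "(\<integral>\<^sup>+ p. (SUP n. h n p) \<partial>lborel) = (SUP n. integral\<^sup>N lborel (h n))"
    by (rule nn_integral_monotone_convergence_SUP)
  moreover have "(SUP n. h n p) = ennreal (indicator {0..} p / f p)" for p
  proof (rule antisym)
    show "(SUP n. h n p) \<le> ennreal (indicator {0..} p / f p)"
      unfolding h_def using f_pos[of p] by (intro SUP_least) (auto intro!: ennreal_leI simp: indicator_def)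
    show "ennreal (indicator {0..} p / f p) \<le> (SUP n. h n p)"
      by (rule SUP_upper2[of "nat \<lceil>p\<rceil>"]) (auto simp: h_def indicator_def)
  qed
  ultimately show ?thesis
    by (simp add: kmax_def h_def nn_integral_inverse_f)
qed

lemma Kfun_surj_on_kdom:
  assumes "k \<in> kdom f"
  obtains p where "Kfun f p = k"
proof -
  have nonneg: "\<exists>p. Kfun f p = k" if k: "0 \<le> k" "ennreal k < kmax f" for k
  proof -
    obtain n :: nat where "ennreal k < ennreal (Kfun f (real n))"
      using k(2) by (auto simp: kmax_eq_SUP_Kfun less_SUP_iff)
    then have "k < Kfun f (real n)"
      by (metis ennreal_leI not_less)
    then have "\<exists>p\<ge>0. p \<le> real n \<and> Kfun f p = k"
      using k(1) isCont_Kfun by (intro IVT) (auto simp: Kfun_0)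
    then show ?thesis by blast
  qed
  show ?thesis
  proof (cases "0 \<le> k")
    case True
    then show ?thesis
      using nonneg[of k] assms that by (auto simp: kdom_def)
  next
    case False
    then obtain p where "Kfun f p = - k"
      using nonneg[of "- k"] assms by (auto simp: kdom_def)
    then show ?thesis
      using that[of "- p"] by (simp add: Kfun_minus)
  qed
qed

lemma Kfun_pfun: "k \<in> kdom f \<Longrightarrow> Kfun f (pfun f k) = k"
  by (metis Kfun_surj_on_kdom pfun_Kfun)

lemma pfun_has_real_derivative:
  assumes k: "k \<in> kdom f"
  shows "(pfun f has_real_derivative f (pfun f k)) (at k)"
proof -
  define p where "p = pfun f k"
  have Kp: "Kfun f p = k"
    using Kfun_pfun[OF k] by (simp add: p_def)
  have "(pfun f has_real_derivative inverse (1 / f p)) (at k)"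
  proof (rule DERIV_inverse_function[where a = "Kfun f (p - 1)" and b = "Kfun f (p + 1)"])
    show "Kfun f (p - 1) < k" "k < Kfun f (p + 1)"
      using Kp strict_monoD[OF Kfun_strict_mono] by auto
    show "Kfun f (pfun f y) = y" if "Kfun f (p - 1) < y" "y < Kfun f (p + 1)" for y
    proof -
      have "\<exists>q\<ge>p - 1. q \<le> p + 1 \<and> Kfun f q = y"
        using that isCont_Kfun by (intro IVT) auto
      then show ?thesis
        by (metis pfun_Kfun)
    qed
    show "isCont (pfun f) k"
      using isCont_inverse_function[of 1 p "pfun f" "Kfun f"] isCont_Kfun Kp by (auto simp: pfun_Kfun)
  qed (use Kfun_has_real_derivative[of p] f_pos[of p] in \<open>auto simp: p_def\<close>)
  then show ?thesis
    by (simp add: p_def)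
qed

end

sublocale nonneg_even_powser \<subseteq> deformation "fser a"
proof
  show "fser a p > 0" for p
    using fser_ge_1[of p] by simp
  show "fser a (- p) = fser a p" for p
    by (simp add: fser_def)
qed (rule continuous_fser)

lemma integrable_lborel_compact_support:
  fixes h :: "real \<Rightarrow> 'b::{banach, second_countable_topology}"
  assumes "compact C" "continuous_on C h" "\<And>x. x \<notin> C \<Longrightarrow> h x = 0"
  shows "integrable lborel h"
proof -
  have "integrable lborel (\<lambda>x. indicator C x *\<^sub>R h x)"
    by (rule borel_integrable_compact) (use assms in auto)
  moreover have "(\<lambda>x. indicator C x *\<^sub>R h x) = h"
    using assms(3) by (auto simp: indicator_def fun_eq_iff)
  ultimately show ?thesis by simp
qed

lemma has_vector_derivative_outside_support:
  fixes h :: "real \<Rightarrow> 'b::real_normed_vector"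
  assumes "closed C" "x \<notin> C" "\<And>y. y \<notin> C \<Longrightarrow> h y = 0"
  shows "(h has_vector_derivative 0) (at x)"
  by (rule has_vector_derivative_transform_within_open[of "\<lambda>_. 0" 0 x "- C"]) (use assms in auto)

lemma has_real_derivative_Re_Im:
  assumes "(g has_vector_derivative g') (at k)"
  shows "((\<lambda>k. Re (g k)) has_real_derivative Re g') (at k)"
    and "((\<lambda>k. Im (g k)) has_real_derivative Im g') (at k)"
  using bounded_linear.has_vector_derivative[OF bounded_linear_Re assms]
    bounded_linear.has_vector_derivative[OF bounded_linear_Im assms]
  by (simp_all add: has_real_derivative_iff_has_vector_derivative)

lemma integral_derivative_compact_support:
  assumes C: "compact C"
    and der: "\<And>x. (h has_real_derivative h' x) (at x)"
    and supp: "\<And>x. x \<notin> C \<Longrightarrow> h x = 0"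
    and int: "integrable lborel h'"
  shows "integral\<^sup>L lborel h' = 0"
proof -
  obtain B where B: "\<And>x. x \<in> C \<Longrightarrow> \<bar>x\<bar> \<le> B"
    using compact_imp_bounded[OF C] unfolding bounded_real by blast
  define b where "b = \<bar>B\<bar> + 1"
  have outside: "x \<notin> C" if "x \<notin> {-b<..<b}" for x
    using B[of x] that by (force simp: b_def)
  have der': "(h has_vector_derivative h' x) (at x)" for x
    using der by (simp add: has_real_derivative_iff_has_vector_derivative)
  have "h' x = 0" if "x \<notin> {-b..b}" for x
    using that outside vector_derivative_unique_at[OF der' has_vector_derivative_outside_support[OF
        compact_imp_closed[OF C] _ supp]] by auto
  then have h'_eq: "(\<lambda>x. if x \<in> {-b..b} then h' x else 0) = h'"
    by auto
  have "(h' has_integral (h b - h (-b))) {-b..b}"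
    using der' by (intro fundamental_theorem_of_calculus) (auto simp: b_def intro: has_vector_derivative_at_within)
  moreover have "h b = 0" "h (-b) = 0"
    using outside supp by auto
  ultimately have "(h' has_integral 0) UNIV"
    by (subst h'_eq[symmetric], subst has_integral_restrict_UNIV) simp
  then show ?thesis
    by (rule has_integral_unique[OF has_integral_integral_lborel[OF int]])
qed

lemma quadratic_nonneg_imp_discriminant_le:
  fixes Q S R :: real
  assumes nonneg: "\<And>t. 0 \<le> t\<^sup>2 * Q - t * S + R" and "Q \<ge> 0"
  shows "S\<^sup>2 \<le> 4 * R * Q"
proof (cases "Q = 0")
  case True
  have "S = 0"
  proof (rule ccontr)
    assume "S \<noteq> 0"
    have "0 \<le> ((R + 1) / S)\<^sup>2 * Q - (R + 1) / S * S + R"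
      by (rule nonneg)
    then show False
      using True \<open>S \<noteq> 0\<close> by simp
  qed
  then show ?thesis using True by simp
next
  case False
  then have "Q > 0" using \<open>Q \<ge> 0\<close> by simp
  have "0 \<le> (S / (2 * Q))\<^sup>2 * Q - S / (2 * Q) * S + R"
    by (rule nonneg)
  also have "\<dots> = R - S\<^sup>2 / (4 * Q)"
    using \<open>Q > 0\<close> by (simp add: field_simps power2_eq_square)
  finally show ?thesis
    using \<open>Q > 0\<close> by (simp add: field_simps)
qed

definition mult_op :: "(real \<Rightarrow> real) \<Rightarrow> (real \<Rightarrow> complex) \<Rightarrow> real \<Rightarrow> complex" where
  "mult_op P \<phi> = (\<lambda>k. complex_of_real (P k) * \<phi> k)"

lemma pop_eq_mult_op: "pop f = mult_op (pfun f)"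
  by (simp add: fun_eq_iff pop_def mult_op_def)

locale normalized_test_function =
  fixes \<psi> :: "real \<Rightarrow> complex"
  assumes smooth_\<psi>: "smooth \<psi>"
    and compact_closure_support: "compact (closure {k. \<psi> k \<noteq> 0})"
    and normalized: "inner2 \<psi> \<psi> = 1"
begin

definition "supp = closure {k. \<psi> k \<noteq> 0}"
definition "\<psi>' = vderiv 1 \<psi>"
definition "\<psi>'' = vderiv 2 \<psi>"
definition "\<rho> k = (Re (\<psi> k))\<^sup>2 + (Im (\<psi> k))\<^sup>2"
definition "\<rho>' k = 2 * (Re (\<psi> k) * Re (\<psi>' k) + Im (\<psi> k) * Im (\<psi>' k))"

lemma compact_supp: "compact supp" and closed_supp: "closed supp"
  using compact_closure_support by (simp_all add: supp_def)

lemma vderiv_differentiable: "vderiv n \<psi> differentiable (at k)"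
  using smooth_\<psi> unfolding smooth_def by blast

lemma \<psi>_has_vector_derivative: "(\<psi> has_vector_derivative \<psi>' k) (at k)"
  using vderiv_differentiable[of 0 k]
  by (simp add: \<psi>'_def vderiv_def vector_derivative_works)

lemma \<psi>'_has_vector_derivative: "(\<psi>' has_vector_derivative \<psi>'' k) (at k)"
proof -
  have "\<psi>'' k = vector_derivative \<psi>' (at k)"
    by (simp add: \<psi>''_def \<psi>'_def numeral_2_eq_2 vderiv_def)
  then show ?thesis
    using vderiv_differentiable[of 1 k] by (simp add: \<psi>'_def vector_derivative_works)
qed

lemma continuous_on_\<psi> [continuous_intros]: "continuous_on S \<psi>"
  using \<psi>_has_vector_derivative
  by (intro continuous_at_imp_continuous_on ballI has_vector_derivative_continuous)

lemma continuous_on_\<psi>' [continuous_intros]: "continuous_on S \<psi>'"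
  using \<psi>'_has_vector_derivative
  by (intro continuous_at_imp_continuous_on ballI has_vector_derivative_continuous)

lemma continuous_on_\<psi>'' [continuous_intros]: "continuous_on S \<psi>''"
  using vderiv_differentiable[of 2]
  by (intro continuous_at_imp_continuous_on ballI differentiable_imp_continuous_within)
     (simp add: \<psi>''_def)

lemma \<psi>_eq_0: "k \<notin> supp \<Longrightarrow> \<psi> k = 0"
  using closure_subset[of "{k. \<psi> k \<noteq> 0}"] unfolding supp_def by auto

lemma \<psi>'_eq_0: "k \<notin> supp \<Longrightarrow> \<psi>' k = 0"
  by (rule vector_derivative_unique_at[OF \<psi>_has_vector_derivative
        has_vector_derivative_outside_support[OF closed_supp _ \<psi>_eq_0]])

lemma \<psi>''_eq_0: "k \<notin> supp \<Longrightarrow> \<psi>'' k = 0"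
  by (rule vector_derivative_unique_at[OF \<psi>'_has_vector_derivative
        has_vector_derivative_outside_support[OF closed_supp _ \<psi>'_eq_0]])

lemma \<rho>_eq_0: "k \<notin> supp \<Longrightarrow> \<rho> k = 0"
  by (simp add: \<rho>_def \<psi>_eq_0)

lemmas eq_0_outside_supp = \<psi>_eq_0 \<psi>'_eq_0 \<psi>''_eq_0 \<rho>_eq_0

lemma integrable_supp:
  fixes h :: "real \<Rightarrow> 'b::{banach, second_countable_topology}"
  shows "continuous_on supp h \<Longrightarrow> (\<And>k. k \<notin> supp \<Longrightarrow> h k = 0) \<Longrightarrow> integrable lborel h"
  by (rule integrable_lborel_compact_support[OF compact_supp])

lemma continuous_on_\<rho> [continuous_intros]: "continuous_on S \<rho>"
  unfolding \<rho>_def[abs_def] by (intro continuous_intros)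

lemma continuous_on_\<rho>' [continuous_intros]: "continuous_on S \<rho>'"
  unfolding \<rho>'_def[abs_def] by (intro continuous_intros)

lemma \<rho>_nonneg: "0 \<le> \<rho> k"
  by (simp add: \<rho>_def)

lemma \<rho>'_eq_0: "k \<notin> supp \<Longrightarrow> \<rho>' k = 0"
  by (simp add: \<rho>'_def \<psi>_eq_0)

lemma \<rho>_has_real_derivative: "(\<rho> has_real_derivative \<rho>' k) (at k)"
proof -
  note d = has_real_derivative_Re_Im[OF \<psi>_has_vector_derivative]
  show ?thesis
    using DERIV_add[OF DERIV_mult[OF d(1) d(1)] DERIV_mult[OF d(2) d(2)]]
    by (simp add: \<rho>_def[abs_def] \<rho>'_def power2_eq_square algebra_simps)
qed

lemma cnj_mult_self: "cnj (\<psi> k) * \<psi> k = complex_of_real (\<rho> k)"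
  using complex_mult_cnj[of "\<psi> k"] by (simp only: \<rho>_def mult.commute)

lemma integral_\<rho>: "integral\<^sup>L lborel \<rho> = 1"
proof -
  have "inner2 \<psi> \<psi> = complex_of_real (integral\<^sup>L lborel \<rho>)"
    unfolding inner2_def cnj_mult_self integral_complex_of_real ..
  then show ?thesis
    using normalized by simp
qed

lemma Re_Delta_mult_op:
  "Re (Delta (mult_op P) \<psi>) = (LINT k|lborel. (P k)\<^sup>2 * \<rho> k) - (LINT k|lborel. P k * \<rho> k)\<^sup>2"
proof -
  have sq: "cnj (\<psi> k) * (complex_of_real (P k) * (complex_of_real (P k) * \<psi> k))
      = complex_of_real ((P k)\<^sup>2 * \<rho> k)" for k
    by (simp add: cnj_mult_self[symmetric] power2_eq_square mult_ac)
  have lin: "cnj (\<psi> k) * (complex_of_real (P k) * \<psi> k) = complex_of_real (P k * \<rho> k)" for k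
    by (simp add: cnj_mult_self[symmetric] mult_ac)
  have "Delta (mult_op P) \<psi> = complex_of_real (LINT k|lborel. (P k)\<^sup>2 * \<rho> k)
      - (complex_of_real (LINT k|lborel. P k * \<rho> k))\<^sup>2"
    unfolding Delta_def inner2_def mult_op_def sq lin integral_complex_of_real ..
  then show ?thesis
    by (simp del: of_real_power)
qed

lemma xop_\<psi>: "xop \<psi> = (\<lambda>k. \<i> * \<psi>' k)"
  by (simp add: xop_def \<psi>'_def vderiv_def)

lemma xop_xop_\<psi>: "xop (xop \<psi>) = (\<lambda>k. - \<psi>'' k)"
proof -
  have "vector_derivative (\<lambda>k. \<i> * \<psi>' k) (at k) = \<i> * \<psi>'' k" for k
    by (rule vector_derivative_at has_vector_derivative_mult_right \<psi>'_has_vector_derivative)+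
  then show ?thesis
    by (simp add: xop_\<psi>) (simp add: xop_def)
qed

lemma integral_norm_\<psi>'_sq:
  "(LINT k|lborel. (Re (\<psi>' k))\<^sup>2 + (Im (\<psi>' k))\<^sup>2)
    = - (LINT k|lborel. Re (\<psi> k) * Re (\<psi>'' k) + Im (\<psi> k) * Im (\<psi>'' k))"
proof -
  let ?A = "\<lambda>k. (Re (\<psi>' k))\<^sup>2 + (Im (\<psi>' k))\<^sup>2"
  let ?B = "\<lambda>k. Re (\<psi> k) * Re (\<psi>'' k) + Im (\<psi> k) * Im (\<psi>'' k)"
  have intA: "integrable lborel ?A" and intB: "integrable lborel ?B"
    by (rule integrable_supp; auto intro!: continuous_intros simp: eq_0_outside_supp)+
  have "integral\<^sup>L lborel (\<lambda>k. ?A k + ?B k) = 0"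
  proof (rule integral_derivative_compact_support[OF compact_supp])
    note d0 = has_real_derivative_Re_Im[OF \<psi>_has_vector_derivative]
    note d1 = has_real_derivative_Re_Im[OF \<psi>'_has_vector_derivative]
    show "((\<lambda>k. Re (\<psi> k) * Re (\<psi>' k) + Im (\<psi> k) * Im (\<psi>' k)) has_real_derivative ?A k + ?B k) (at k)" for k
      using DERIV_add[OF DERIV_mult[OF d0(1) d1(1)] DERIV_mult[OF d0(2) d1(2)], of k]
      by (simp add: power2_eq_square algebra_simps)
  qed (use intA intB in \<open>auto simp: eq_0_outside_supp\<close>)
  then show ?thesis
    using Bochner_Integration.integral_add[OF intA intB] by simp
qed

text \<open>The real part of <psi, x psi>.\<close>
definition "xmean = (LINT k|lborel. Im (\<psi> k) * Re (\<psi>' k) - Re (\<psi> k) * Im (\<psi>' k))"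

lemma Re_Delta_xop_ge:
  "(LINT k|lborel. (Re (\<psi>' k))\<^sup>2 + (Im (\<psi>' k))\<^sup>2) - xmean\<^sup>2 \<le> Re (Delta xop \<psi>)"
proof -
  have int2: "integrable lborel (\<lambda>k. cnj (\<psi> k) * (- \<psi>'' k))"
    and int1: "integrable lborel (\<lambda>k. cnj (\<psi> k) * (\<i> * \<psi>' k))"
    by (rule integrable_supp; auto intro!: continuous_intros simp: eq_0_outside_supp)+
  have "Re (inner2 \<psi> (xop (xop \<psi>))) = (LINT k|lborel. Re (cnj (\<psi> k) * (- \<psi>'' k)))"
    unfolding inner2_def xop_xop_\<psi> by (rule integral_bounded_linear[OF bounded_linear_Re int2, symmetric])
  also have "\<dots> = (LINT k|lborel. (Re (\<psi>' k))\<^sup>2 + (Im (\<psi>' k))\<^sup>2)"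
    by (simp add: integral_norm_\<psi>'_sq integral_minus[symmetric])
  finally have second: "Re (inner2 \<psi> (xop (xop \<psi>))) = (LINT k|lborel. (Re (\<psi>' k))\<^sup>2 + (Im (\<psi>' k))\<^sup>2)" .
  have "Re (inner2 \<psi> (xop \<psi>)) = (LINT k|lborel. Re (cnj (\<psi> k) * (\<i> * \<psi>' k)))"
    unfolding inner2_def xop_\<psi> by (rule integral_bounded_linear[OF bounded_linear_Re int1, symmetric])
  also have "\<dots> = xmean"
    unfolding xmean_def by (simp add: algebra_simps)
  finally have first: "Re (inner2 \<psi> (xop \<psi>)) = xmean" .
  have "Re (Delta xop \<psi>) = Re (inner2 \<psi> (xop (xop \<psi>))) - (Re (inner2 \<psi> (xop \<psi>)))\<^sup>2
      + (Im (inner2 \<psi> (xop \<psi>)))\<^sup>2"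
    by (simp add: Delta_def Re_power2)
  then show ?thesis
    using first second by simp
qed

lemma integral_deriv_mult_\<rho>:
  assumes der: "\<And>k. k \<in> supp \<Longrightarrow> (u has_real_derivative u' k) (at k)"
    and cont: "continuous_on supp u'"
  shows "(LINT k|lborel. u' k * \<rho> k) = - (LINT k|lborel. u k * \<rho>' k)"
proof -
  have cont_u: "continuous_on supp u"
    using der by (intro continuous_at_imp_continuous_on ballI DERIV_isCont)
  have intA: "integrable lborel (\<lambda>k. u' k * \<rho> k)" and intB: "integrable lborel (\<lambda>k. u k * \<rho>' k)"
    by (rule integrable_supp; auto intro!: continuous_intros cont cont_u simp: \<rho>_eq_0 \<rho>'_eq_0)+
  have "integral\<^sup>L lborel (\<lambda>k. u' k * \<rho> k + u k * \<rho>' k) = 0"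
  proof (rule integral_derivative_compact_support[OF compact_supp])
    show "((\<lambda>k. u k * \<rho> k) has_real_derivative u' k * \<rho> k + u k * \<rho>' k) (at k)" for k
    proof (cases "k \<in> supp")
      case True
      then show ?thesis
        using DERIV_mult[OF der \<rho>_has_real_derivative] by (simp add: mult.commute)
    next
      case False
      have "((\<lambda>k. u k * \<rho> k) has_vector_derivative 0) (at k)"
        by (rule has_vector_derivative_outside_support[OF closed_supp False]) (simp add: \<rho>_eq_0)
      then show ?thesis
        using False by (simp add: has_real_derivative_iff_has_vector_derivative \<rho>_eq_0 \<rho>'_eq_0)
    qed
  qed (use intA intB in \<open>auto simp: \<rho>_eq_0\<close>)
  then show ?thesis
    using Bochner_Integration.integral_add[OF intA intB] by simp
qed

lemma integral_quadratic_nonneg: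
  assumes "continuous_on supp u"
  shows "0 \<le> t\<^sup>2 * (LINT k|lborel. (u k)\<^sup>2 * \<rho> k) - t * (LINT k|lborel. u k * \<rho>' k)
      + ((LINT k|lborel. (Re (\<psi>' k))\<^sup>2 + (Im (\<psi>' k))\<^sup>2) - xmean\<^sup>2)"
proof -
  let ?A1 = "\<lambda>k. (u k)\<^sup>2 * \<rho> k"
  let ?A2 = "\<lambda>k. u k * \<rho>' k"
  let ?A3 = "\<lambda>k. (Re (\<psi>' k))\<^sup>2 + (Im (\<psi>' k))\<^sup>2"
  let ?A4 = "\<lambda>k. Im (\<psi> k) * Re (\<psi>' k) - Re (\<psi> k) * Im (\<psi>' k)"
  let ?F = "\<lambda>k. t\<^sup>2 * ?A1 k + (- t * ?A2 k + (?A3 k + (- 2 * xmean * ?A4 k + xmean\<^sup>2 * \<rho> k)))"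
  have "integrable lborel ?A1" "integrable lborel ?A2" "integrable lborel ?A3" "integrable lborel ?A4"
    "integrable lborel \<rho>"
    by (rule integrable_supp; auto intro!: continuous_intros assms simp: eq_0_outside_supp \<rho>'_eq_0)+
  then have "has_bochner_integral lborel ?F (t\<^sup>2 * integral\<^sup>L lborel ?A1 + (- t * integral\<^sup>L lborel ?A2
      + (integral\<^sup>L lborel ?A3 + (- 2 * xmean * xmean + xmean\<^sup>2 * 1))))"
    unfolding xmean_def integral_\<rho>[symmetric]
    by (intro has_bochner_integral_add has_bochner_integral_mult_right has_bochner_integral_integrable)
  \<comment> \<open>?F is the square of the modulus of t u psi - (psi' + i xmean psi).\<close>
  moreover have "?F k = (t * u k * Re (\<psi> k) - (Re (\<psi>' k) - xmean * Im (\<psi> k)))\<^sup>2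
      + (t * u k * Im (\<psi> k) - (Im (\<psi>' k) + xmean * Re (\<psi> k)))\<^sup>2" for k
    unfolding \<rho>_def \<rho>'_def by algebra
  then have "0 \<le> integral\<^sup>L lborel ?F"
    by (intro Bochner_Integration.integral_nonneg) simp
  ultimately show ?thesis
    by (simp add: has_bochner_integral_integral_eq power2_eq_square)
qed

lemma Re_Delta_mult_op_eq_variance:
  assumes "continuous_on supp P"
  shows "Re (Delta (mult_op P) \<psi>) = (LINT k|lborel. (P k - (LINT q|lborel. P q * \<rho> q))\<^sup>2 * \<rho> k)"
proof -
  define m where "m = (LINT q|lborel. P q * \<rho> q)"
  have "integrable lborel (\<lambda>k. (P k)\<^sup>2 * \<rho> k)" "integrable lborel (\<lambda>k. P k * \<rho> k)"
    "integrable lborel \<rho>"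
    by (rule integrable_supp; auto intro!: continuous_intros assms simp: \<rho>_eq_0)+
  then have "has_bochner_integral lborel (\<lambda>k. (P k)\<^sup>2 * \<rho> k + (- 2 * m * (P k * \<rho> k) + m\<^sup>2 * \<rho> k))
      ((LINT k|lborel. (P k)\<^sup>2 * \<rho> k) + (- 2 * m * m + m\<^sup>2 * 1))"
    unfolding m_def integral_\<rho>[symmetric]
    by (intro has_bochner_integral_add has_bochner_integral_mult_right has_bochner_integral_integrable)
  then have "(LINT k|lborel. (P k - m)\<^sup>2 * \<rho> k) = (LINT k|lborel. (P k)\<^sup>2 * \<rho> k) - m\<^sup>2"
    by (subst (asm) has_bochner_integral_cong[OF refl _ refl, where g = "\<lambda>k. (P k - m)\<^sup>2 * \<rho> k"])
       (auto simp: has_bochner_integral_integral_eq power2_eq_square algebra_simps)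
  then show ?thesis
    by (simp add: Re_Delta_mult_op m_def)
qed

lemma robertson_mult_op:
  assumes der: "\<And>k. k \<in> supp \<Longrightarrow> (P has_real_derivative P' k) (at k)"
    and cont: "continuous_on supp P'"
  shows "(LINT k|lborel. P' k * \<rho> k)\<^sup>2 \<le> 4 * Re (Delta xop \<psi>) * Re (Delta (mult_op P) \<psi>)"
proof -
  define m where "m = (LINT q|lborel. P q * \<rho> q)"
  define u where "u k = P k - m" for k
  define R where "R = (LINT k|lborel. (Re (\<psi>' k))\<^sup>2 + (Im (\<psi>' k))\<^sup>2) - xmean\<^sup>2"
  define Q where "Q = (LINT k|lborel. (u k)\<^sup>2 * \<rho> k)"
  have cont_P: "continuous_on supp P"
    using der by (intro continuous_at_imp_continuous_on ballI DERIV_isCont)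
  then have cont_u: "continuous_on supp u"
    unfolding u_def[abs_def] by (intro continuous_intros)
  have der_u: "(u has_real_derivative P' k) (at k)" if "k \<in> supp" for k
    unfolding u_def[abs_def] using DERIV_diff[OF der[OF that] DERIV_const] by simp
  have "0 \<le> Q" and "R \<le> Re (Delta xop \<psi>)"
    using \<rho>_nonneg Re_Delta_xop_ge by (auto simp: Q_def R_def)
  have "(LINT k|lborel. P' k * \<rho> k)\<^sup>2 = (LINT k|lborel. u k * \<rho>' k)\<^sup>2"
    by (simp add: integral_deriv_mult_\<rho>[OF der_u cont])
  also have "\<dots> \<le> 4 * R * Q"
    using integral_quadratic_nonneg[OF cont_u] \<open>0 \<le> Q\<close>
    by (intro quadratic_nonneg_imp_discriminant_le) (simp add: R_def Q_def)
  also have "\<dots> \<le> 4 * Re (Delta xop \<psi>) * Q"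
    using \<open>0 \<le> Q\<close> \<open>R \<le> Re (Delta xop \<psi>)\<close> by (intro mult_right_mono) simp_all
  also have "Q = Re (Delta (mult_op P) \<psi>)"
    using cont_P by (simp add: Re_Delta_mult_op_eq_variance Q_def u_def m_def)
  finally show ?thesis .
qed

lemma jensen_\<rho>:
  assumes X: "continuous_on supp X" and g: "convex_on UNIV g"
  shows "g (LINT k|lborel. X k * \<rho> k) \<le> (LINT k|lborel. g (X k) * \<rho> k)"
proof -
  define M where "M = density lborel \<rho>"
  \<comment> \<open>X is only continuous on supp; cutting it off there makes it measurable.\<close>
  define Y where "Y k = indicator supp k *\<^sub>R X k" for k
  have [measurable]: "\<rho> \<in> borel_measurable lborel"
    using borel_measurable_continuous_onI[OF continuous_on_\<rho>] by simp
  have [measurable]: "g \<in> borel_measurable borel"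
    by (rule borel_measurable_continuous_onI[OF convex_on_continuous[OF open_UNIV g]])
  have [measurable]: "Y \<in> borel_measurable lborel"
    unfolding Y_def[abs_def] using borel_measurable_continuous_on_indicator[OF _ X] closed_supp
    by simp
  have int_\<rho>: "integrable lborel \<rho>"
    by (rule integrable_supp) (auto intro!: continuous_intros simp: \<rho>_eq_0)
  have prob: "prob_space M"
  proof (rule prob_spaceI)
    have "emeasure M (space M) = (\<integral>\<^sup>+ k. ennreal (\<rho> k) \<partial>lborel)"
      by (simp add: M_def emeasure_density)
    also have "\<dots> = 1"
      using nn_integral_eq_integral[OF int_\<rho>] \<rho>_nonneg by (simp add: integral_\<rho>)
    finally show "emeasure M (space M) = 1" .
  qed
  have \<rho>_Y: "\<rho> k * Y k = X k * \<rho> k" and \<rho>_gY: "\<rho> k * g (Y k) = g (X k) * \<rho> k" for k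
    by (cases "k \<in> supp"; simp add: Y_def \<rho>_eq_0)+
  have gX: "continuous_on supp (\<lambda>k. g (X k))"
    using continuous_on_compose2[OF convex_on_continuous[OF open_UNIV g] X] by simp
  have "integrable lborel (\<lambda>k. X k * \<rho> k)" "integrable lborel (\<lambda>k. g (X k) * \<rho> k)"
    by (rule integrable_supp; auto intro!: continuous_intros X gX simp: \<rho>_eq_0)+
  then have "integrable M Y" "integrable M (\<lambda>k. g (Y k))"
    unfolding M_def by (subst integrable_density; simp add: \<rho>_nonneg \<rho>_Y \<rho>_gY)+
  then have "g (prob_space.expectation M Y) \<le> prob_space.expectation M (\<lambda>k. g (Y k))"
    using g by (intro prob_space.jensens_inequality[OF prob, of Y UNIV 0 0]) auto
  moreover have "prob_space.expectation M Y = (LINT k|lborel. X k * \<rho> k)"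
    "prob_space.expectation M (\<lambda>k. g (Y k)) = (LINT k|lborel. g (X k) * \<rho> k)"
    unfolding M_def by (subst integral_density; simp add: \<rho>_nonneg \<rho>_Y \<rho>_gY)+
  ultimately show ?thesis
    by simp
qed

lemma Re_Delta_mult_op_bounds:
  assumes "continuous_on supp P"
  shows "0 \<le> Re (Delta (mult_op P) \<psi>)" "Re (Delta (mult_op P) \<psi>) \<le> (LINT k|lborel. (P k)\<^sup>2 * \<rho> k)"
proof -
  show "0 \<le> Re (Delta (mult_op P) \<psi>)"
    unfolding Re_Delta_mult_op_eq_variance[OF assms]
    by (intro Bochner_Integration.integral_nonneg) (simp add: \<rho>_nonneg)
  show "Re (Delta (mult_op P) \<psi>) \<le> (LINT k|lborel. (P k)\<^sup>2 * \<rho> k)"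
    unfolding Re_Delta_mult_op by simp
qed

end

locale deformed_state = deformation f + normalized_test_function \<psi> for f \<psi> +
  assumes supp_in_kdom: "closure {k. \<psi> k \<noteq> 0} \<subseteq> kdom f"
begin

lemma pfun_has_real_derivative_on_supp:
  "k \<in> supp \<Longrightarrow> (pfun f has_real_derivative f (pfun f k)) (at k)"
  using supp_in_kdom pfun_has_real_derivative by (auto simp: supp_def)

lemma continuous_on_pfun: "continuous_on supp (pfun f)"
  using pfun_has_real_derivative_on_supp
  by (intro continuous_at_imp_continuous_on ballI DERIV_isCont)

lemma continuous_on_f_pfun: "continuous_on supp (\<lambda>k. f (pfun f k))"
  using continuous_on_compose2[OF continuous_f continuous_on_pfun] by simp

lemma robertson_pop:
  "(LINT k|lborel. f (pfun f k) * \<rho> k)\<^sup>2 \<le> 4 * Re (Delta xop \<psi>) * Re (Delta (pop f) \<psi>)"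
  unfolding pop_eq_mult_op
  by (rule robertson_mult_op[OF pfun_has_real_derivative_on_supp continuous_on_f_pfun])

end

theorem mainTheorem7:
  fixes a :: "nat \<Rightarrow> real" and \<psi> :: "real \<Rightarrow> complex"
  assumes a_nonneg: "\<And>n. n \<ge> 1 \<Longrightarrow> a n \<ge> 0"
    and conv: "\<And>p::real. summable (\<lambda>n. a (Suc n) * p ^ (2 * Suc n))"
    and psi: "Cc_inf (kdom (fser a)) \<psi>"
    and unit: "inner2 \<psi> \<psi> = 1"
  shows "let f = fser a; g = (\<lambda>s. f (sqrt \<bar>s\<bar>));
             dx = Re (Delta xop \<psi>); dp = Re (Delta (pop f) \<psi>) in
           convex_on {0..} g \<and> mono_on {0..} g \<and> (\<forall>p. g (p\<^sup>2) = f p)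
           \<and> dx * dp \<ge> (1/4) * (g dp)\<^sup>2
           \<and> (dp > 0 \<longrightarrow> dx \<ge> (f (sqrt dp))\<^sup>2 / (4 * dp))"
proof -
  interpret nonneg_even_powser a
    using a_nonneg conv by unfold_locales
  interpret deformed_state "fser a" \<psi>
    using psi unit by unfold_locales (auto simp: Cc_inf_def)
  define g where "g s = fser a (sqrt \<bar>s\<bar>)" for s
  define P where "P = pfun (fser a)"
  define dx where "dx = Re (Delta xop \<psi>)"
  define dp where "dp = Re (Delta (pop (fser a)) \<psi>)"
  have dp: "0 \<le> dp" "dp \<le> (LINT k|lborel. (P k)\<^sup>2 * \<rho> k)"
    using Re_Delta_mult_op_bounds[OF continuous_on_pfun] by (simp_all add: dp_def P_def pop_eq_mult_op)
  have "g dp \<le> g (LINT k|lborel. (P k)\<^sup>2 * \<rho> k)"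
    using mono_onD[OF mono_on_fser_sqrt_abs] dp by (simp add: g_def)
  also have "\<dots> \<le> (LINT k|lborel. g ((P k)\<^sup>2) * \<rho> k)"
    unfolding g_def using continuous_on_pfun
    by (intro jensen_\<rho> convex_fser_sqrt_abs continuous_intros) (simp add: P_def)
  also have "\<dots> = (LINT k|lborel. fser a (P k) * \<rho> k)"
    by (simp only: g_def fser_sqrt_abs_power2)
  finally have "(g dp)\<^sup>2 \<le> (LINT k|lborel. fser a (P k) * \<rho> k)\<^sup>2"
    using fser_ge_1[of "sqrt \<bar>dp\<bar>"] by (intro power_mono) (simp_all add: g_def)
  also have "\<dots> \<le> 4 * dx * dp"
    unfolding P_def dx_def dp_def by (rule robertson_pop)
  finally have "(1/4) * (g dp)\<^sup>2 \<le> dx * dp"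
    by simp
  then show ?thesis
    using convex_on_subset[OF convex_fser_sqrt_abs] mono_on_fser_sqrt_abs fser_sqrt_abs_power2
    by (auto simp: Let_def g_def dx_def dp_def pos_divide_le_eq)
qed

end
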